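(* Let $F=SU(3)/T_{SU(3)}$ and let $z_1,z_2\in H^2(F;\mathbb{C})$ be non-zero with $z_1\cdot z_2=0$. Then there are $\lambda_1,\lambda_2\in\mathbb{C}^*$ such that either $z_1=\lambda_1x_+$ and $z_2=\lambda_2x_-$, or $z_1=\lambda_1x_-$ and $z_2=\lambda_2x_+$, where $x_\pm:=x_1+\tfrac12(1\pm\sqrt{-3})\,x_2$.
   Context: $T_{SU(3)}$ is the maximal torus of diagonal matrices in $SU(3)$, and $H^*(F;\mathbb{C})$ is identified with $\mathbb{C}[x_1,x_2]/(x_1^2+x_2^2+x_1x_2,\;x_1^2x_2+x_1x_2^2)$, $x_1,x_2$ of degree $2$. *)

theory Defs
  imports Complex_Main "HOL-Computational_Algebra.Polynomial"
begin

text \<open>The polynomial ring C[x1,x2] is modelled as (complex poly) poly: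
  polynomials in x2 whose coefficients are polynomials in x1.\<close>

definition cst :: "complex \<Rightarrow> complex poly poly" where
  "cst c = [:[:c:]:]"

definition X1 :: "complex poly poly" where
  "X1 = [:[:0, 1:]:]"

definition X2 :: "complex poly poly" where
  "X2 = [:0, 1:]"

definition rel_ideal :: "complex poly poly set" where
  "rel_ideal = {a * (X1^2 + X2^2 + X1 * X2) + b * (X1^2 * X2 + X1 * X2^2) | a b. True}"

text \<open>Equality of classes in H^*(F;C) = C[x1,x2]/rel_ideal.\<close>
definition coh_eq :: "complex poly poly \<Rightarrow> complex poly poly \<Rightarrow> bool" where
  "coh_eq p q \<longleftrightarrow> p - q \<in> rel_ideal"

text \<open>Representatives of H^2(F;C): linear forms in x1, x2 (x1, x2 of degree 2).\<close>
definition H2 :: "complex poly poly set" where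
  "H2 = {cst a * X1 + cst b * X2 | a b. True}"

definition x_plus :: "complex poly poly" where
  "x_plus = X1 + cst ((1 + \<i> * complex_of_real (sqrt 3)) / 2) * X2"

definition x_minus :: "complex poly poly" where
  "x_minus = X1 + cst ((1 - \<i> * complex_of_real (sqrt 3)) / 2) * X2"

end

theory Submission
  imports Defs
begin

text \<open>Substituting \<open>x\<^sub>2 := s x\<^sub>1\<close> turns the relations into \<open>(1 + s + s\<^sup>2) x\<^sub>1\<^sup>2\<close> and
  \<open>(s + s\<^sup>2) x\<^sub>1\<^sup>3\<close>, so the \<open>x\<^sub>1\<^sup>2\<close>-coefficient of every element of the ideal is a fixed
  multiple of \<open>1 + s + s\<^sup>2\<close>. A product of linear forms \<open>(a x\<^sub>1 + b x\<^sub>2)(c x\<^sub>1 + d x\<^sub>2)\<close>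
  vanishing in cohomology therefore satisfies \<open>ac = bd = ad + bc = k\<close>; for nonzero forms this
  forces \<open>k \<noteq> 0\<close> and \<open>b/a\<close>, \<open>d/c\<close> to be the two roots \<open>\<omega>\<^sub>\<plusminus> = (1 \<plusminus> \<surd>-3)/2\<close> of
  \<open>t\<^sup>2 - t + 1\<close>, which is exactly the claim.\<close>

lemma coeff_0_poly_eq:
  assumes "coeff x 0 = 0"
  shows "coeff (poly P x) 0 = coeff (coeff P 0) 0"
  using assms by (induct P) (simp_all add: coeff_mult)

lemma poly_linear_form_slope:
  "poly (cst a * X1 + cst b * X2) [:0, s:] = [:0, a + b * s:]"
  by (simp add: cst_def X1_def X2_def)

lemma rel_ideal_quadratic_coeff:
  assumes "p \<in> rel_ideal"
  shows "\<exists>k. \<forall>s. coeff (poly p [:0, s:]) 2 = k * (1 + s + s\<^sup>2)"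
proof -
  from assms obtain A B where p: "p = A * (X1\<^sup>2 + X2\<^sup>2 + X1 * X2) + B * (X1\<^sup>2 * X2 + X1 * X2\<^sup>2)"
    by (auto simp: rel_ideal_def)
  have "coeff (poly p [:0, s:]) 2 = coeff (coeff A 0) 0 * (1 + s + s\<^sup>2)" for s
  proof -
    have "poly (X1\<^sup>2 + X2\<^sup>2 + X1 * X2) [:0, s:] = [:0, 0, 1 + s + s\<^sup>2:]"
      and "poly (X1\<^sup>2 * X2 + X1 * X2\<^sup>2) [:0, s:] = [:0, 0, 0, s + s\<^sup>2:]"
      by (simp_all add: X1_def X2_def power2_eq_square algebra_simps)
    then have "poly p [:0, s:] = poly A [:0, s:] * [:0, 0, 1 + s + s\<^sup>2:]
        + poly B [:0, s:] * [:0, 0, 0, s + s\<^sup>2:]"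
      by (simp only: p poly_add poly_mult)
    then have "coeff (poly p [:0, s:]) 2 = coeff (poly A [:0, s:]) 0 * (1 + s + s\<^sup>2)"
      by (simp add: numeral_2_eq_2 mult_pCons_right coeff_pCons)
    then show ?thesis
      by (simp add: coeff_0_poly_eq)
  qed
  then show ?thesis
    by blast
qed

lemma linear_forms_product_coh_eq_0:
  assumes "coh_eq ((cst a * X1 + cst b * X2) * (cst c * X1 + cst d * X2)) 0"
  obtains k where "a * c = k" "b * d = k" "a * d + b * c = k"
proof -
  have "(cst a * X1 + cst b * X2) * (cst c * X1 + cst d * X2) \<in> rel_ideal"
    using assms by (simp add: coh_eq_def)
  then obtain k where hk: "\<And>s. coeff (poly ((cst a * X1 + cst b * X2) * (cst c * X1 + cst d * X2))
      [:0, s:]) 2 = k * (1 + s + s\<^sup>2)"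
    using rel_ideal_quadratic_coeff by blast
  have "poly ([:a, b:] * [:c, d:]) s = poly (smult k [:1, 1, 1:]) s" for s
    using hk[of s] unfolding poly_mult poly_linear_form_slope
    by (simp add: numeral_2_eq_2 power2_eq_square algebra_simps)
  then have "[:a, b:] * [:c, d:] = smult k [:1, 1, 1:]"
    using poly_eq_poly_eq_iff by blast
  then have coeffs: "coeff ([:a, b:] * [:c, d:]) i = coeff (smult k [:1, 1, 1:]) i" for i
    by simp
  have "a * c = k" "a * d + b * c = k" "b * d = k"
    using coeffs[of 0] coeffs[of 1] coeffs[of 2] by (simp_all add: numeral_2_eq_2 algebra_simps)
  then show thesis
    using that by blast
qed

definition omega_plus :: complex where
  "omega_plus = (1 + \<i> * complex_of_real (sqrt 3)) / 2"

definition omega_minus :: complex where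
  "omega_minus = (1 - \<i> * complex_of_real (sqrt 3)) / 2"

lemma omega_plus_add_omega_minus: "omega_plus + omega_minus = 1"
  unfolding omega_plus_def omega_minus_def by (simp add: add_divide_distrib[symmetric])

lemma omega_plus_mult_omega_minus: "omega_plus * omega_minus = 1"
proof -
  have "complex_of_real (sqrt 3) * complex_of_real (sqrt 3) = 3"
    by (simp flip: of_real_mult)
  then show ?thesis
    unfolding omega_plus_def omega_minus_def by (simp add: algebra_simps)
qed

lemma root_of_t2_minus_t_plus_1:
  fixes a b :: complex
  assumes "a * a + b * b = a * b"
  shows "b = a * omega_plus \<or> b = a * omega_minus"
proof -
  have "(b - a * omega_plus) * (b - a * omega_minus)
      = b * b - a * b * (omega_plus + omega_minus) + a * a * (omega_plus * omega_minus)"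
    by (simp add: algebra_simps)
  also have "\<dots> = 0"
    using assms by (simp add: omega_plus_add_omega_minus omega_plus_mult_omega_minus)
      (simp add: algebra_simps)
  finally show ?thesis
    by simp
qed

lemma isotropic_pair_slopes:
  fixes a b c d :: complex
  assumes "a * c = k" "b * d = k" "a * d + b * c = k" "a \<noteq> 0" "c \<noteq> 0"
  shows "(b = a * omega_plus \<and> d = c * omega_minus) \<or> (b = a * omega_minus \<and> d = c * omega_plus)"
proof -
  have "a * a * (b * d) + b * b * (a * c) = a * b * (a * d + b * c)"
    by (simp add: algebra_simps)
  then have "k * (a * a + b * b) = k * (a * b)"
    using assms(1-3) by (simp add: algebra_simps)
  moreover have "k \<noteq> 0"
    using assms(1,4,5) by auto
  ultimately have "a * a + b * b = a * b"
    by simp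
  have swap: "d = c * w'" if "b = a * w" "w * w' = 1" for w w'
  proof -
    have "a * (w * d) = a * c"
      using assms(1,2) that(1) by (simp add: mult.assoc)
    then have "w * d = c"
      using assms(4) by simp
    then show ?thesis
      using that(2) by (metis mult.assoc mult.commute mult_1)
  qed
  from root_of_t2_minus_t_plus_1[OF \<open>a * a + b * b = a * b\<close>] show ?thesis
    using swap[of omega_plus omega_minus] swap[of omega_minus omega_plus]
      omega_plus_mult_omega_minus by (auto simp: mult.commute)
qed

lemma coh_eq_refl: "coh_eq p p"
  unfolding coh_eq_def rel_ideal_def by (auto intro: exI[of _ 0])

lemma linear_form_zero_coh_eq_0: "coh_eq (cst 0 * X1 + cst 0 * X2) 0"
  using coh_eq_refl by (simp add: cst_def)

lemma linear_form_scaled_slope: "cst a * X1 + cst (a * w) * X2 = cst a * (X1 + cst w * X2)"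
  by (simp add: cst_def algebra_simps)

theorem lemma4p3:
  fixes z1 z2 :: "complex poly poly"
  assumes "z1 \<in> H2" and "z2 \<in> H2"
    and "\<not> coh_eq z1 0" and "\<not> coh_eq z2 0"
    and "coh_eq (z1 * z2) 0"
  shows "\<exists>l1 l2. l1 \<noteq> 0 \<and> l2 \<noteq> 0 \<and>
     ((coh_eq z1 (cst l1 * x_plus) \<and> coh_eq z2 (cst l2 * x_minus)) \<or>
      (coh_eq z1 (cst l1 * x_minus) \<and> coh_eq z2 (cst l2 * x_plus)))"
proof -
  obtain a b c d where z1: "z1 = cst a * X1 + cst b * X2" and z2: "z2 = cst c * X1 + cst d * X2"
    using assms(1,2) by (auto simp: H2_def)
  obtain k where k: "a * c = k" "b * d = k" "a * d + b * c = k"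
    using assms(5) linear_forms_product_coh_eq_0 unfolding z1 z2 by blast
  have "a \<noteq> 0 \<or> b \<noteq> 0" "c \<noteq> 0 \<or> d \<noteq> 0"
    using assms(3,4) linear_form_zero_coh_eq_0 unfolding z1 z2 by auto
  then have "a \<noteq> 0" "c \<noteq> 0"
    using k by auto
  have "x_plus = X1 + cst omega_plus * X2" "x_minus = X1 + cst omega_minus * X2"
    unfolding x_plus_def x_minus_def omega_plus_def omega_minus_def by simp_all
  with isotropic_pair_slopes[OF k \<open>a \<noteq> 0\<close> \<open>c \<noteq> 0\<close>] show ?thesis
    unfolding z1 z2 using \<open>a \<noteq> 0\<close> \<open>c \<noteq> 0\<close> coh_eq_refl linear_form_scaled_slope by metis
qed

end
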